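(* Let $\mathcal M$ be a general model for CTT$_{\rm qe}$, $\phi$ an assignment into $\mathcal M$, $\mathbf x_\alpha$ a variable, $\beta$ a type, and $\mathbf A_\epsilon$ an eval-free expression of type $\epsilon$ in which $\mathbf x_\alpha$ is not free. If $V^{\mathcal M}_\phi(\mathsf{is\text{-}expr}^{\beta}_{\epsilon\to o}\,\mathbf A_\epsilon)=\mathrm T$, then $V^{\mathcal M}_\phi([\![\mathsf{abs}_{\epsilon\to\epsilon\to\epsilon}\,\ulcorner\mathbf x_\alpha\urcorner\,\mathbf A_\epsilon]\!]_{\alpha\to\beta})=V^{\mathcal M}_\phi(\lambda\mathbf x_\alpha.[\![\mathbf A_\epsilon]\!]_\beta)$.
   Context: The logic CTT$_{\rm qe}$. Types: $\iota$ (individuals), $o$ (truth values), $\epsilon$ (constructions), and $(\alpha\to\beta)$ for types $\alpha,\beta$. Let $\mathcal V$ be a set of typed symbols (variables) containing denumerably many symbols $\mathbf{x}_\alpha$ of each type $\alpha$, and $\mathcal C$ a disjoint set of typed symbols (constants) containing the logical constants $=_{\alpha\to\alpha\to o}$ (each $\alpha$), $\mathsf{is\text{-}var}_{\epsilon\to o}$, $\mathsf{is\text{-}var}^\alpha_{\epsilon\to o}$, $\mathsf{is\text{-}con}_{\epsilon\to o}$, $\mathsf{is\text{-}con}^\alpha_{\epsilon\to o}$, $\mathsf{app}_{\epsilon\to\epsilon\to\epsilon}$, $\mathsf{abs}_{\epsilon\to\epsilon\to\epsilon}$, $\mathsf{quo}_{\epsilon\to\epsilon}$, $\mathsf{is\text{-}expr}_{\epsilon\to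 o}$, $\mathsf{is\text{-}expr}^\alpha_{\epsilon\to o}$ (each $\alpha$), $\sqsubset_{\epsilon\to\epsilon\to o}$, $\mathsf{is\text{-}free\text{-}in}_{\epsilon\to\epsilon\to o}$. Expressions $\mathbf{A}_\alpha$ (subscript = type) are defined inductively: (1) a variable $\mathbf{x}_\alpha$; (2) a constant $\mathbf{c}_\alpha$; (3) application $(\mathbf{F}_{\alpha\to\beta}\,\mathbf{A}_\alpha)$ of type $\beta$; (4) abstraction $(\lambda\mathbf{x}_\alpha.\mathbf{B}_\beta)$ of type $\alpha\to\beta$; (5) quotation $\ulcorner\mathbf{A}_\alpha\urcorner$ of type $\epsilon$, formed only if $\mathbf{A}_\alpha$ is eval-free; (6) evaluation $[\![\mathbf{A}_\epsilon]\!]_{\mathbf{B}_\beta}$ of type $\beta$, written $[\![\mathbf{A}_\epsilon]\!]_\beta$ (the second component only fixes the type). An expression is eval-free if built using rules (1)–(5) only. A formula is an expression of type $o$. In an eval-free expression, an occurrence of a variable $\mathbf{x}_\alpha$ is free if it is not inside a quotation and not inside a subexpression of the form $\lambda\mathbf{x}_\alpha.\mathbf{C}$; $\mathbf{x}_\alpha$ is free in $\mathbf{B}$ if it has a free occurrence there. Constructions: the smallest set of expressions of type $\epsilon$ containing all $\ulcorner\mathbf{x}_\alpha\urcorner$ and $\ulcorner\mathbf{c}_\alpha\urcorner$ and closed under forming $\mathsf{app}\,\mathbf{A}_\epsilon\,\mathbf{B}_\epsilon$, $\mathsf{abs}\,\mathbf{A}_\epsilon\,\mathbf{B}_\epsilon$,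 $\mathsf{quo}\,\mathbf{A}_\epsilon$. The injective map $\mathcal E$ from eval-free expressions to constructions: $\mathcal E(\mathbf{x}_\alpha)=\ulcorner\mathbf{x}_\alpha\urcorner$, $\mathcal E(\mathbf{c}_\alpha)=\ulcorner\mathbf{c}_\alpha\urcorner$, $\mathcal E(\mathbf{F}\,\mathbf{A})=\mathsf{app}\,\mathcal E(\mathbf F)\,\mathcal E(\mathbf A)$, $\mathcal E(\lambda\mathbf{x}_\alpha.\mathbf B)=\mathsf{abs}\,\mathcal E(\mathbf x_\alpha)\,\mathcal E(\mathbf B)$, $\mathcal E(\ulcorner\mathbf A\urcorner)=\mathsf{quo}\,\mathcal E(\mathbf A)$. Abbreviations: $\mathbf A_\alpha=\mathbf B_\alpha$ is $=_{\alpha\to\alpha\to o}\mathbf A_\alpha\mathbf B_\alpha$; $T_o$ is $(=_{o\to o\to o}\,=\,=_{o\to o\to o})$; $F_o$ is $(\lambda x_o.T_o)=(\lambda x_o.x_o)$; $\forall\mathbf x_\alpha.\mathbf A_o$ is $(\lambda\mathbf x_\alpha.T_o)=(\lambda\mathbf x_\alpha.\mathbf A_o)$; $\neg\mathbf A_o$ is $=_{o\to o\to o}F_o\,\mathbf A_o$; $\exists\mathbf x_\alpha.\mathbf A_o$ is $\neg\forall\mathbf x_\alpha.\neg\mathbf A_o$; $\mathbf A\neq\mathbf B$ is $\neg(\mathbf A=\mathbf B)$; $\mathsf{IS\text{-}EFFECTIVE\text{-}IN}(\mathbf x_\alpha,\mathbf B_\beta)$ is $\exists\mathbf y_\alpha.((\lambda\mathbf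 x_\alpha.\mathbf B_\beta)\,\mathbf y_\alpha\neq\mathbf B_\beta)$ for a variable $\mathbf y_\alpha$ distinct from $\mathbf x_\alpha$. Semantics. A frame is $\{D_\alpha\}$ with $D_\iota$ nonempty, $D_o=\{\mathrm T,\mathrm F\}$, $D_\epsilon$ the set of all constructions, and $D_{\alpha\to\beta}$ some set of total functions $D_\alpha\to D_\beta$. An interpretation $(\{D_\alpha\},I)$ has $I(\mathbf c_\alpha)\in D_\alpha$ for each constant, with: $I(=_{\alpha\to\alpha\to o})$ the (curried) identity relation on $D_\alpha$; $I(\mathsf{is\text{-}var})(A)=\mathrm T$ iff $A=\ulcorner\mathbf x_\beta\urcorner$ for some variable of some type; $I(\mathsf{is\text{-}var}^\alpha)(A)=\mathrm T$ iff $A=\ulcorner\mathbf x_\alpha\urcorner$ for some variable of type $\alpha$; likewise $\mathsf{is\text{-}con}$, $\mathsf{is\text{-}con}^\alpha$ with constants; $I(\mathsf{app})(A)(B)$, $I(\mathsf{abs})(A)(B)$, $I(\mathsf{quo})(A)$ are the constructions $\mathsf{app}\,A\,B$, $\mathsf{abs}\,A\,B$, $\mathsf{quo}\,A$; $I(\mathsf{is\text{-}expr})(A)=\mathrm T$ iff $A=\mathcal E(\mathbf B_\beta)$ for some eval-free $\mathbf B_\beta$ of some type; $I(\mathsf{is\text{-}expr}^\alpha)(A)=\mathrm T$ iff $A=\mathcal E(\mathbf B_\alpha)$ for some eval-free $\mathbf B_\alpha$; $I(\sqsubset)(A)(B)=\mathrm T$ iff $A$ is a proper subexpression of $B$; $I(\mathsf{is\text{-}free\text{-}in})(A)(B)=\mathrm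 T$ iff $A=\ulcorner\mathbf x_\alpha\urcorner$, $B=\mathcal E(\mathbf C_\beta)$ for some eval-free $\mathbf C_\beta$, and $\mathbf x_\alpha$ is free in $\mathbf C_\beta$. An assignment $\phi$ maps each $\mathbf x_\alpha\in\mathcal V$ into $D_\alpha$; $\phi[\mathbf x_\alpha\mapsto d]$ is the usual modification. A general model is an interpretation $\mathcal M$ for which there is a valuation $V^{\mathcal M}_\phi(\mathbf C_\gamma)\in D_\gamma$ (for all $\phi$ and all expressions) with: (V1) $V_\phi(\mathbf x_\alpha)=\phi(\mathbf x_\alpha)$; (V2) $V_\phi(\mathbf c_\alpha)=I(\mathbf c_\alpha)$; (V3) $V_\phi(\mathbf F\,\mathbf A)=V_\phi(\mathbf F)(V_\phi(\mathbf A))$; (V4) $V_\phi(\lambda\mathbf x_\alpha.\mathbf B_\beta)$ is the $f\in D_{\alpha\to\beta}$ with $f(d)=V_{\phi[\mathbf x_\alpha\mapsto d]}(\mathbf B_\beta)$; (V5) $V_\phi(\ulcorner\mathbf A_\alpha\urcorner)=\mathcal E(\mathbf A_\alpha)$; (V6) if $V_\phi(\mathsf{is\text{-}expr}^\beta\,\mathbf A_\epsilon)=\mathrm T$ then $V_\phi([\![\mathbf A_\epsilon]\!]_\beta)=V_\phi(\mathcal E^{-1}(V_\phi(\mathbf A_\epsilon)))$; (V7) for each $\beta$ there is a fixed $d_\beta\in D_\beta$ such that $V_\phi([\![\mathbf A_\epsilon]\!]_\beta)=d_\beta$ whenever $V_\phi(\mathsf{is\text{-}expr}^\beta\,\mathbf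 A_\epsilon)=\mathrm F$. $\mathcal M\models\mathbf A_o$ ($\mathbf A_o$ valid in $\mathcal M$) iff $V_\phi(\mathbf A_o)=\mathrm T$ for all $\phi$; $\models\mathbf A_o$ (valid in CTT$_{\rm qe}$) iff valid in every general model. A standard model is an interpretation in which every $D_{\alpha\to\beta}$ is the set of all total functions $D_\alpha\to D_\beta$. *)

theory Defs
  imports Main
begin

datatype ty = TInd | TBool | TEps | TFun ty ty

text \<open>Constants: the logical constants, plus denumerably many non-logical
  constants CUser n a of each type a.\<close>
datatype con =
    CEq ty | CIsVar | CIsVarT ty | CIsCon | CIsConT ty
  | CApp | CAbs | CQuo | CIsExpr | CIsExprT ty | CSub | CIsFreeIn
  | CUser nat ty

fun con_ty :: "con \<Rightarrow> ty" where
  "con_ty (CEq a) = TFun a (TFun a TBool)"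
| "con_ty CIsVar = TFun TEps TBool"
| "con_ty (CIsVarT a) = TFun TEps TBool"
| "con_ty CIsCon = TFun TEps TBool"
| "con_ty (CIsConT a) = TFun TEps TBool"
| "con_ty CApp = TFun TEps (TFun TEps TEps)"
| "con_ty CAbs = TFun TEps (TFun TEps TEps)"
| "con_ty CQuo = TFun TEps TEps"
| "con_ty CIsExpr = TFun TEps TBool"
| "con_ty (CIsExprT a) = TFun TEps TBool"
| "con_ty CSub = TFun TEps (TFun TEps TBool)"
| "con_ty CIsFreeIn = TFun TEps (TFun TEps TBool)"
| "con_ty (CUser n a) = a"

text \<open>Var x a is the variable x of type a; Lam x a B is
  the abstraction over the variable x of type a; Eval A b is the evaluation
  of A at type b (the second component only fixes the type).\<close>
datatype expr =
    Var nat ty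
  | Con con
  | App expr expr
  | Lam nat ty expr
  | Quo expr
  | Eval expr ty

type_synonym var = "nat \<times> ty"

fun eval_free :: "expr \<Rightarrow> bool" where
  "eval_free (Var x a) = True"
| "eval_free (Con c) = True"
| "eval_free (App F A) = (eval_free F \<and> eval_free A)"
| "eval_free (Lam x a B) = eval_free B"
| "eval_free (Quo A) = eval_free A"
| "eval_free (Eval A b) = False"

inductive wt :: "expr \<Rightarrow> ty \<Rightarrow> bool" where
  wt_var: "wt (Var x a) a"
| wt_con: "wt (Con c) (con_ty c)"
| wt_app: "wt F (TFun a b) \<Longrightarrow> wt A a \<Longrightarrow> wt (App F A) b"
| wt_lam: "wt B b \<Longrightarrow> wt (Lam x a B) (TFun a b)"
| wt_quo: "wt A a \<Longrightarrow> eval_free A \<Longrightarrow> wt (Quo A) TEps"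
| wt_eval: "wt A TEps \<Longrightarrow> wt (Eval A b) b"

text \<open>Free occurrence of the variable (x,a) (meaningful for eval-free
  expressions): not inside a quotation, not inside a binder of (x,a).\<close>
fun free_in :: "nat \<Rightarrow> ty \<Rightarrow> expr \<Rightarrow> bool" where
  "free_in x a (Var y b) = (x = y \<and> a = b)"
| "free_in x a (Con c) = False"
| "free_in x a (App F A) = (free_in x a F \<or> free_in x a A)"
| "free_in x a (Lam y b B) = (\<not> (x = y \<and> a = b) \<and> free_in x a B)"
| "free_in x a (Quo A) = False"
| "free_in x a (Eval A b) = free_in x a A"

inductive construction :: "expr \<Rightarrow> bool" where
  "construction (Quo (Var x a))"
| "construction (Quo (Con c))"
| "construction A \<Longrightarrow> construction B \<Longrightarrow> construction (App (App (Con CApp) A) B)"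
| "construction A \<Longrightarrow> construction B \<Longrightarrow> construction (App (App (Con CAbs) A) B)"
| "construction A \<Longrightarrow> construction (App (Con CQuo) A)"

fun enc :: "expr \<Rightarrow> expr" where
  "enc (Var x a) = Quo (Var x a)"
| "enc (Con c) = Quo (Con c)"
| "enc (App F A) = App (App (Con CApp) (enc F)) (enc A)"
| "enc (Lam x a B) = App (App (Con CAbs) (enc (Var x a))) (enc B)"
| "enc (Quo A) = App (Con CQuo) (enc A)"
| "enc (Eval A b) = undefined"

inductive immsub :: "expr \<Rightarrow> expr \<Rightarrow> bool" where
  "immsub F (App F A)"
| "immsub A (App F A)"
| "immsub (Var x a) (Lam x a B)"
| "immsub B (Lam x a B)"
| "immsub A (Quo A)"
| "immsub A (Eval A b)"

definition proper_subexpr :: "expr \<Rightarrow> expr \<Rightarrow> bool" where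
  "proper_subexpr = immsub\<^sup>+\<^sup>+"

text \<open>Semantic values: individuals (codes of type 'i), truth values,
  constructions, and codes (of type 'f) for elements of function domains.\<close>
datatype ('i, 'f) val = IV 'i | BV bool | EV expr | FV 'f

text \<open>A structure: D_iota (as Dind), the function domains (Dfun a b is the
  set of codes of elements of D_(a->b)), the application of a function code to
  an argument, the interpretation of constants, and the valuation V.\<close>
record ('i, 'f) model =
  Dind :: "'i set"
  Dfun :: "ty \<Rightarrow> ty \<Rightarrow> 'f set"
  fapp :: "'f \<Rightarrow> ('i, 'f) val \<Rightarrow> ('i, 'f) val"
  Icon :: "con \<Rightarrow> ('i, 'f) val"
  Val :: "(var \<Rightarrow> ('i, 'f) val) \<Rightarrow> expr \<Rightarrow> ('i, 'f) val"

primrec Dom :: "('i, 'f) model \<Rightarrow> ty \<Rightarrow> ('i, 'f) val set" where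
  "Dom M TInd = IV ` Dind M"
| "Dom M TBool = {BV True, BV False}"
| "Dom M TEps = EV ` {A. construction A}"
| "Dom M (TFun a b) = FV ` Dfun M a b"

definition vapp :: "('i, 'f) model \<Rightarrow> ('i, 'f) val \<Rightarrow> ('i, 'f) val \<Rightarrow> ('i, 'f) val" where
  "vapp M v d = (case v of FV f \<Rightarrow> fapp M f d | _ \<Rightarrow> undefined)"

text \<open>Frame: D_iota nonempty and each D_(a->b) a set of total functions
  D_a -> D_b (represented injectively by codes).\<close>
definition frame :: "('i, 'f) model \<Rightarrow> bool" where
  "frame M \<longleftrightarrow> Dind M \<noteq> {}
     \<and> (\<forall>a b. \<forall>f\<in>Dfun M a b. \<forall>d\<in>Dom M a. fapp M f d \<in> Dom M b)
     \<and> (\<forall>a b. \<forall>f\<in>Dfun M a b. \<forall>g\<in>Dfun M a b.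
           (\<forall>d\<in>Dom M a. fapp M f d = fapp M g d) \<longrightarrow> f = g)"

definition is_expr_of :: "expr \<Rightarrow> ty \<Rightarrow> bool" where
  "is_expr_of A b \<longleftrightarrow> (\<exists>B. eval_free B \<and> wt B b \<and> A = enc B)"

definition is_interpretation :: "('i, 'f) model \<Rightarrow> bool" where
  "is_interpretation M \<longleftrightarrow> frame M
   \<and> (\<forall>c. Icon M c \<in> Dom M (con_ty c))
   \<and> (\<forall>a. \<forall>d\<in>Dom M a. \<forall>e\<in>Dom M a. vapp M (vapp M (Icon M (CEq a)) d) e = BV (d = e))
   \<and> (\<forall>A. construction A \<longrightarrow>
        vapp M (Icon M CIsVar) (EV A) = BV (\<exists>x b. A = Quo (Var x b)))
   \<and> (\<forall>a A. construction A \<longrightarrow>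
        vapp M (Icon M (CIsVarT a)) (EV A) = BV (\<exists>x. A = Quo (Var x a)))
   \<and> (\<forall>A. construction A \<longrightarrow>
        vapp M (Icon M CIsCon) (EV A) = BV (\<exists>c. A = Quo (Con c)))
   \<and> (\<forall>a A. construction A \<longrightarrow>
        vapp M (Icon M (CIsConT a)) (EV A) = BV (\<exists>c. con_ty c = a \<and> A = Quo (Con c)))
   \<and> (\<forall>A B. construction A \<longrightarrow> construction B \<longrightarrow>
        vapp M (vapp M (Icon M CApp) (EV A)) (EV B) = EV (App (App (Con CApp) A) B))
   \<and> (\<forall>A B. construction A \<longrightarrow> construction B \<longrightarrow>
        vapp M (vapp M (Icon M CAbs) (EV A)) (EV B) = EV (App (App (Con CAbs) A) B))
   \<and> (\<forall>A. construction A \<longrightarrow>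
        vapp M (Icon M CQuo) (EV A) = EV (App (Con CQuo) A))
   \<and> (\<forall>A. construction A \<longrightarrow>
        vapp M (Icon M CIsExpr) (EV A) = BV (\<exists>b. is_expr_of A b))
   \<and> (\<forall>a A. construction A \<longrightarrow>
        vapp M (Icon M (CIsExprT a)) (EV A) = BV (is_expr_of A a))
   \<and> (\<forall>A B. construction A \<longrightarrow> construction B \<longrightarrow>
        vapp M (vapp M (Icon M CSub) (EV A)) (EV B) = BV (proper_subexpr A B))
   \<and> (\<forall>A B. construction A \<longrightarrow> construction B \<longrightarrow>
        vapp M (vapp M (Icon M CIsFreeIn) (EV A)) (EV B) =
          BV (\<exists>x a C c. A = Quo (Var x a) \<and> eval_free C \<and> wt C c \<and> B = enc C
                        \<and> free_in x a C))"

definition assignment :: "('i, 'f) model \<Rightarrow> (var \<Rightarrow> ('i, 'f) val) \<Rightarrow> bool" where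
  "assignment M \<phi> \<longleftrightarrow> (\<forall>x a. \<phi> (x, a) \<in> Dom M a)"

definition valuation :: "('i, 'f) model \<Rightarrow> bool" where
  "valuation M \<longleftrightarrow>
     (\<forall>\<phi> C c. assignment M \<phi> \<longrightarrow> wt C c \<longrightarrow> Val M \<phi> C \<in> Dom M c)
   \<and> (\<forall>\<phi> x a. assignment M \<phi> \<longrightarrow> Val M \<phi> (Var x a) = \<phi> (x, a))
   \<and> (\<forall>\<phi> c. assignment M \<phi> \<longrightarrow> Val M \<phi> (Con c) = Icon M c)
   \<and> (\<forall>\<phi> F A a b. assignment M \<phi> \<longrightarrow> wt F (TFun a b) \<longrightarrow> wt A a \<longrightarrow>
        Val M \<phi> (App F A) = vapp M (Val M \<phi> F) (Val M \<phi> A))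
   \<and> (\<forall>\<phi> x a B b. assignment M \<phi> \<longrightarrow> wt B b \<longrightarrow>
        Val M \<phi> (Lam x a B) \<in> Dom M (TFun a b)
        \<and> (\<forall>d\<in>Dom M a. vapp M (Val M \<phi> (Lam x a B)) d = Val M (\<phi>((x, a) := d)) B))
   \<and> (\<forall>\<phi> A. assignment M \<phi> \<longrightarrow> wt (Quo A) TEps \<longrightarrow> Val M \<phi> (Quo A) = EV (enc A))
   \<and> (\<forall>\<phi> A b B. assignment M \<phi> \<longrightarrow> wt A TEps \<longrightarrow>
        Val M \<phi> (App (Con (CIsExprT b)) A) = BV True \<longrightarrow>
        eval_free B \<longrightarrow> wt B b \<longrightarrow> Val M \<phi> A = EV (enc B) \<longrightarrow>
        Val M \<phi> (Eval A b) = Val M \<phi> B)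
   \<and> (\<exists>d. (\<forall>b. d b \<in> Dom M b) \<and>
        (\<forall>\<phi> A b. assignment M \<phi> \<longrightarrow> wt A TEps \<longrightarrow>
           Val M \<phi> (App (Con (CIsExprT b)) A) = BV False \<longrightarrow>
           Val M \<phi> (Eval A b) = d b))"

definition general_model :: "('i, 'f) model \<Rightarrow> bool" where
  "general_model M \<longleftrightarrow> is_interpretation M \<and> valuation M"

end

theory Submission
  imports Defs
begin

text \<open>Since V(is-expr^b A) is true, A denotes E(B) for an eval-free B of type b,
  so abs(\<ulcorner>x\<urcorner>, A) denotes E(\<lambda>x. B), an expression of type a \<Rightarrow> b, and the
  left-hand side is V(\<lambda>x. B). As x is not free in the eval-free A, updating x
  leaves the value of A, hence of the evaluation of A, unchanged; so \<lambda>x. B and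
  \<lambda>x. \<lbrakk>A\<rbrakk>_b agree pointwise and are equal by extensionality of the frame.\<close>

lemma wt_quote_var: "wt (Quo (Var x a)) TEps"
  by (rule wt_quo[OF wt_var]) simp

lemma wt_Con_CAbs: "wt (Con CAbs) (TFun TEps (TFun TEps TEps))"
  using wt_con[of CAbs] by simp

lemma wt_abs_quote_var: "wt (App (Con CAbs) (Quo (Var x a))) (TFun TEps TEps)"
  by (rule wt_app[OF wt_Con_CAbs wt_quote_var])

lemma wt_abs_quote: "wt A TEps \<Longrightarrow> wt (App (App (Con CAbs) (Quo (Var x a))) A) TEps"
  by (rule wt_app[OF wt_abs_quote_var])

lemma assignment_fun_upd: "assignment M \<phi> \<Longrightarrow> d \<in> Dom M a \<Longrightarrow> assignment M (\<phi>((x, a) := d))"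
  by (simp add: assignment_def)

context
  fixes M :: "('i, 'f) model"
  assumes gm: "general_model M"
begin

lemma valuation_conditions:
  shows "\<forall>\<phi> C c. assignment M \<phi> \<longrightarrow> wt C c \<longrightarrow> Val M \<phi> C \<in> Dom M c"
    and "\<forall>\<phi> x a. assignment M \<phi> \<longrightarrow> Val M \<phi> (Var x a) = \<phi> (x, a)"
    and "\<forall>\<phi> c. assignment M \<phi> \<longrightarrow> Val M \<phi> (Con c) = Icon M c"
    and "\<forall>\<phi> F A a b. assignment M \<phi> \<longrightarrow> wt F (TFun a b) \<longrightarrow> wt A a \<longrightarrow>
      Val M \<phi> (App F A) = vapp M (Val M \<phi> F) (Val M \<phi> A)"
    and "\<forall>\<phi> x a B b. assignment M \<phi> \<longrightarrow> wt B b \<longrightarrow>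
      Val M \<phi> (Lam x a B) \<in> Dom M (TFun a b)
      \<and> (\<forall>d\<in>Dom M a. vapp M (Val M \<phi> (Lam x a B)) d = Val M (\<phi>((x, a) := d)) B)"
    and "\<forall>\<phi> A. assignment M \<phi> \<longrightarrow> wt (Quo A) TEps \<longrightarrow> Val M \<phi> (Quo A) = EV (enc A)"
    and "\<forall>\<phi> A b B. assignment M \<phi> \<longrightarrow> wt A TEps \<longrightarrow>
      Val M \<phi> (App (Con (CIsExprT b)) A) = BV True \<longrightarrow>
      eval_free B \<longrightarrow> wt B b \<longrightarrow> Val M \<phi> A = EV (enc B) \<longrightarrow>
      Val M \<phi> (Eval A b) = Val M \<phi> B"
  using gm unfolding general_model_def valuation_def by - (elim conjE; assumption)+

lemma interpretation_conditions:
  shows "frame M"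
    and "\<forall>A B. construction A \<longrightarrow> construction B \<longrightarrow>
      vapp M (vapp M (Icon M CAbs) (EV A)) (EV B) = EV (App (App (Con CAbs) A) B)"
    and "\<forall>b A. construction A \<longrightarrow>
      vapp M (Icon M (CIsExprT b)) (EV A) = BV (is_expr_of A b)"
  using gm unfolding general_model_def is_interpretation_def by - (elim conjE; assumption)+

lemma Val_in_Dom: "assignment M \<phi> \<Longrightarrow> wt C c \<Longrightarrow> Val M \<phi> C \<in> Dom M c"
  using valuation_conditions(1) by blast

lemma Val_Var: "assignment M \<phi> \<Longrightarrow> Val M \<phi> (Var x a) = \<phi> (x, a)"
  using valuation_conditions(2) by blast

lemma Val_Con: "assignment M \<phi> \<Longrightarrow> Val M \<phi> (Con c) = Icon M c"
  using valuation_conditions(3) by blast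

lemma Val_App:
  "assignment M \<phi> \<Longrightarrow> wt F (TFun a b) \<Longrightarrow> wt A a \<Longrightarrow>
    Val M \<phi> (App F A) = vapp M (Val M \<phi> F) (Val M \<phi> A)"
  using valuation_conditions(4) by blast

lemma vapp_Val_Lam:
  "assignment M \<phi> \<Longrightarrow> wt B b \<Longrightarrow> d \<in> Dom M a \<Longrightarrow>
    vapp M (Val M \<phi> (Lam x a B)) d = Val M (\<phi>((x, a) := d)) B"
  using valuation_conditions(5) by blast

lemma Val_Quo: "assignment M \<phi> \<Longrightarrow> wt (Quo A) TEps \<Longrightarrow> Val M \<phi> (Quo A) = EV (enc A)"
  using valuation_conditions(6) by blast

lemma Val_Eval_is_expr:
  "assignment M \<phi> \<Longrightarrow> wt A TEps \<Longrightarrow> Val M \<phi> (App (Con (CIsExprT b)) A) = BV True \<Longrightarrow>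
    eval_free B \<Longrightarrow> wt B b \<Longrightarrow> Val M \<phi> A = EV (enc B) \<Longrightarrow>
    Val M \<phi> (Eval A b) = Val M \<phi> B"
  using valuation_conditions(7) by blast

lemma vapp_Icon_CAbs:
  "construction A \<Longrightarrow> construction B \<Longrightarrow>
    vapp M (vapp M (Icon M CAbs) (EV A)) (EV B) = EV (App (App (Con CAbs) A) B)"
  using interpretation_conditions(2) by blast

lemma vapp_Icon_CIsExprT:
  "construction A \<Longrightarrow> vapp M (Icon M (CIsExprT b)) (EV A) = BV (is_expr_of A b)"
  using interpretation_conditions(3) by blast

lemma Dom_TFun_ext:
  assumes "u \<in> Dom M (TFun a b)" and "v \<in> Dom M (TFun a b)"
    and "\<And>d. d \<in> Dom M a \<Longrightarrow> vapp M u d = vapp M v d"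
  shows "u = v"
proof -
  obtain f g where "f \<in> Dfun M a b" "g \<in> Dfun M a b" "u = FV f" "v = FV g"
    using assms(1,2) by auto
  with interpretation_conditions(1) show ?thesis
    using assms(3) unfolding frame_def vapp_def by auto
qed

lemma Val_Lam_cong:
  assumes "assignment M \<phi>" and "assignment M \<psi>" and "wt B b" and "wt B' b"
    and "\<And>d. d \<in> Dom M a \<Longrightarrow> Val M (\<phi>((x, a) := d)) B = Val M (\<psi>((x, a) := d)) B'"
  shows "Val M \<phi> (Lam x a B) = Val M \<psi> (Lam x a B')"
proof (rule Dom_TFun_ext)
  show "Val M \<phi> (Lam x a B) \<in> Dom M (TFun a b)" "Val M \<psi> (Lam x a B') \<in> Dom M (TFun a b)"
    using assms(1-4) by (simp_all only: Val_in_Dom wt_lam)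
  show "vapp M (Val M \<phi> (Lam x a B)) d = vapp M (Val M \<psi> (Lam x a B')) d" if "d \<in> Dom M a" for d
    using assms(1-4) that assms(5)[OF that] by (simp add: vapp_Val_Lam)
qed

lemma Val_cong_free:
  "wt C c \<Longrightarrow> eval_free C \<Longrightarrow> assignment M \<phi> \<Longrightarrow> assignment M \<psi> \<Longrightarrow>
    (\<And>y t. free_in y t C \<Longrightarrow> \<phi> (y, t) = \<psi> (y, t)) \<Longrightarrow> Val M \<phi> C = Val M \<psi> C"
proof (induction C c arbitrary: \<phi> \<psi> rule: wt.induct)
  case (wt_var x a)
  then show ?case by (simp add: Val_Var)
next
  case (wt_con c)
  then show ?case by (simp add: Val_Con)
next
  case (wt_app F a b A)
  have "Val M \<phi> F = Val M \<psi> F" "Val M \<phi> A = Val M \<psi> A"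
    using wt_app.prems by (intro wt_app.IH; simp)+
  then show ?case
    unfolding Val_App[OF wt_app.prems(2) wt_app.hyps] Val_App[OF wt_app.prems(3) wt_app.hyps]
    by simp
next
  case (wt_lam B b x a)
  have "Val M (\<phi>((x, a) := d)) B = Val M (\<psi>((x, a) := d)) B" if d: "d \<in> Dom M a" for d
  proof (rule wt_lam.IH)
    show "eval_free B"
      using wt_lam.prems(1) by simp
    show "assignment M (\<phi>((x, a) := d))" "assignment M (\<psi>((x, a) := d))"
      using wt_lam.prems(2,3) d by (blast intro: assignment_fun_upd)+
    show "(\<phi>((x, a) := d)) (y, t) = (\<psi>((x, a) := d)) (y, t)" if "free_in y t B" for y t
      using wt_lam.prems(4) that by auto
  qed
  with wt_lam.prems(2,3) wt_lam.hyps wt_lam.hyps show ?case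
    by (rule Val_Lam_cong)
next
  case (wt_quo A a)
  then show ?case by (simp add: Val_Quo wt.wt_quo)
next
  case (wt_eval A b)
  then show ?case by simp
qed

lemma Val_IsExprT:
  assumes "assignment M \<phi>" and "wt A TEps"
  shows "Val M \<phi> (App (Con (CIsExprT b)) A)
    = BV (\<exists>B. eval_free B \<and> wt B b \<and> Val M \<phi> A = EV (enc B))"
proof -
  obtain C where C: "construction C" "Val M \<phi> A = EV C"
    using Val_in_Dom[OF assms] by auto
  have "wt (Con (CIsExprT b)) (TFun TEps TBool)"
    using wt_con[of "CIsExprT b"] by simp
  then have "Val M \<phi> (App (Con (CIsExprT b)) A) = vapp M (Icon M (CIsExprT b)) (EV C)"
    using assms C(2) by (simp add: Val_App Val_Con)
  also have "\<dots> = BV (is_expr_of C b)"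
    using C(1) by (rule vapp_Icon_CIsExprT)
  finally show ?thesis
    using C(2) unfolding is_expr_of_def by auto
qed

lemma Val_Eval_enc:
  assumes "assignment M \<phi>" and "wt A TEps" and "eval_free B" and "wt B b"
    and "Val M \<phi> A = EV (enc B)"
  shows "Val M \<phi> (Eval A b) = Val M \<phi> B"
proof (rule Val_Eval_is_expr[OF assms(1,2) _ assms(3-5)])
  show "Val M \<phi> (App (Con (CIsExprT b)) A) = BV True"
    using assms by (auto simp: Val_IsExprT)
qed

lemma Val_abs_quote:
  assumes "assignment M \<phi>" and "wt A TEps" and "Val M \<phi> A = EV C"
  shows "Val M \<phi> (App (App (Con CAbs) (Quo (Var x a))) A)
    = EV (App (App (Con CAbs) (Quo (Var x a))) C)"
proof -
  have "construction C"
    using Val_in_Dom[OF assms(1,2)] assms(3) by auto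
  moreover have "construction (Quo (Var x a))"
    by (rule construction.intros)
  moreover have "Val M \<phi> (App (App (Con CAbs) (Quo (Var x a))) A)
      = vapp M (vapp M (Icon M CAbs) (EV (Quo (Var x a)))) (EV C)"
    using Val_App[OF assms(1) wt_abs_quote_var assms(2)]
      Val_App[OF assms(1) wt_Con_CAbs wt_quote_var]
    by (simp add: assms(1,3) Val_Con Val_Quo wt_quote_var)
  ultimately show ?thesis
    by (simp add: vapp_Icon_CAbs)
qed

end

theorem mainTheorem15:
  fixes M :: "('i, 'f) model" and \<phi> :: "var \<Rightarrow> ('i, 'f) val"
    and x :: nat and a b :: ty and A :: expr
  assumes "general_model M"
    and "assignment M \<phi>"
    and "eval_free A" and "wt A TEps"
    and "\<not> free_in x a A"
    and "Val M \<phi> (App (Con (CIsExprT b)) A) = BV True"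
  shows "Val M \<phi> (Eval (App (App (Con CAbs) (Quo (Var x a))) A) (TFun a b))
         = Val M \<phi> (Lam x a (Eval A b))"
proof -
  note gm = assms(1) and \<phi> = assms(2)
  obtain B where B: "eval_free B" "wt B b" "Val M \<phi> A = EV (enc B)"
    using assms(6) Val_IsExprT[OF gm \<phi> assms(4)] by auto
  have "Val M \<phi> (Eval (App (App (Con CAbs) (Quo (Var x a))) A) (TFun a b)) = Val M \<phi> (Lam x a B)"
    using Val_abs_quote[OF gm \<phi> assms(4) B(3)] B(1,2)
    by (intro Val_Eval_enc[OF gm \<phi> wt_abs_quote[OF assms(4)]]) (auto intro: wt_lam)
  also have "\<dots> = Val M \<phi> (Lam x a (Eval A b))"
  proof (rule Val_Lam_cong[OF gm \<phi> \<phi> B(2) wt_eval[OF assms(4)]])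
    fix d assume d: "d \<in> Dom M a"
    have \<phi>_d: "assignment M (\<phi>((x, a) := d))"
      using \<phi> d by (rule assignment_fun_upd)
    have "Val M (\<phi>((x, a) := d)) A = Val M \<phi> A"
      using assms(5) by (intro Val_cong_free[OF gm assms(4,3) \<phi>_d \<phi>]) auto
    then show "Val M (\<phi>((x, a) := d)) B = Val M (\<phi>((x, a) := d)) (Eval A b)"
      using Val_Eval_enc[OF gm \<phi>_d assms(4) B(1,2)] B(3) by simp
  qed
  finally show ?thesis .
qed

end
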